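(* If a system $C=(1,c_2,c_3,c_4,c_5,2c_5-c_2)$ is canonical and its subsystem $(1,c_2,c_3,c_4,c_5)$ is noncanonical, then $C=(1,2,3,c_4,c_4+1,2c_4)$ and $c_4>4$.
   Context: A system is a tuple $C=(c_1,\dots,c_n)$ of integers with $1=c_1<c_2<\dots<c_n$; for $k\le n$, $(c_1,\dots,c_k)$ is a subsystem. For a positive integer $v$, $\mathrm{opt}_C(v)$ is the minimum of $\sum_i x_i$ over $x\in\mathbb{Z}_{\ge0}^n$ with $\sum_i c_ix_i=v$. The greedy representation of $v$ is produced by: for $i=n$ down to $1$, while $c_i\le$ remaining value, take a coin $c_i$. $\mathrm{grd}_C(v)$ is its number of coins. A positive integer $w$ is a counterexample if $\mathrm{opt}_C(w)<\mathrm{grd}_C(w)$; $C$ is canonical if it has none, noncanonical otherwise. *)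

theory Defs
  imports Main
begin

definition is_system :: "nat list \<Rightarrow> bool" where
  "is_system cs \<longleftrightarrow> cs \<noteq> [] \<and> hd cs = 1 \<and> sorted_wrt (<) cs"

definition reps :: "nat list \<Rightarrow> nat \<Rightarrow> nat list set" where
  "reps cs v = {x. length x = length cs \<and> (\<Sum>i<length cs. cs ! i * x ! i) = v}"

definition opt :: "nat list \<Rightarrow> nat \<Rightarrow> nat" where
  "opt cs v = (LEAST k. \<exists>x\<in>reps cs v. sum_list x = k)"

fun grd_desc :: "nat list \<Rightarrow> nat \<Rightarrow> nat" where
  "grd_desc [] v = 0"
| "grd_desc (c # cs) v = v div c + grd_desc cs (v mod c)"

definition grd :: "nat list \<Rightarrow> nat \<Rightarrow> nat" where
  "grd cs v = grd_desc (rev cs) v"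

definition counterexample :: "nat list \<Rightarrow> nat \<Rightarrow> bool" where
  "counterexample cs w \<longleftrightarrow> w > 0 \<and> opt cs w < grd cs w"

definition canonical :: "nat list \<Rightarrow> bool" where
  "canonical cs \<longleftrightarrow> (\<forall>w. \<not> counterexample cs w)"

end

theory Submission imports Defs begin

text \<open>Let \<open>w\<close> be the least counterexample of \<open>S = (1,a,b,c,d)\<close> and \<open>e = 2d - a\<close>.
  Below \<open>e\<close> the greedy choices of \<open>S\<close> and \<open>C = S + e\<close> agree, so canonicity of \<open>C\<close>
  forces \<open>e \<le> w\<close>, while the Kozen--Zaks bound gives \<open>w < c + d\<close>, hence \<open>d < c + a\<close>.
  Greedy on \<open>C\<close> pays \<open>1 + (c + a - d)\<close> coins for \<open>c + d\<close>, so \<open>d = c + a - 1\<close> and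
  \<open>w = 2c + a - 2\<close>; by Kozen--Zaks an optimal representation of \<open>w\<close> uses only \<open>c\<close> and \<open>d\<close>,
  which forces \<open>w = 2c\<close> and \<open>a = 2\<close>. Then \<open>b \<noteq> c - 1\<close> (else greedy is optimal at
  \<open>2c\<close>), and greedy on \<open>C\<close> at \<open>b + c\<close> uses \<open>1 + \<lceil>(b-1)/2\<rceil>\<close> coins, so \<open>b = 3\<close>.\<close>

lemma opt_le: "x \<in> reps cs v \<Longrightarrow> opt cs v \<le> sum_list x"
  unfolding opt_def by (rule Least_le) blast

lemma reps_update:
  assumes "i < length cs" "x \<in> reps cs v"
  shows "x[i := t] \<in> reps cs (v + cs ! i * t - cs ! i * x ! i)"
proof -
  let ?I = "{..<length cs}" and ?r = "\<Sum>j\<in>{..<length cs} - {i}. cs ! j * x ! j"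
  have i: "i \<in> ?I" using assms(1) by simp
  have len: "length x = length cs" and v: "(\<Sum>j\<in>?I. cs ! j * x ! j) = v"
    using assms(2) by (auto simp: reps_def)
  have "(\<Sum>j\<in>?I. cs ! j * x[i := t] ! j)
      = cs ! i * x[i := t] ! i + (\<Sum>j\<in>?I - {i}. cs ! j * x[i := t] ! j)"
    using sum.remove[OF _ i] by blast
  also have "\<dots> = cs ! i * t + ?r"
    using len assms(1) by (auto intro!: sum.cong)
  finally have "(\<Sum>j\<in>?I. cs ! j * x[i := t] ! j) = cs ! i * t + ?r" .
  moreover have "v = cs ! i * x ! i + ?r"
    using sum.remove[OF _ i, of "\<lambda>j. cs ! j * x ! j"] v by simp
  ultimately show ?thesis using len by (simp add: reps_def)
qed

lemma reps_add_coin: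
  "i < length cs \<Longrightarrow> x \<in> reps cs v \<Longrightarrow> x[i := Suc (x ! i)] \<in> reps cs (v + cs ! i)"
  using reps_update[of i cs x v "Suc (x ! i)"] by simp

lemma reps_remove_coin:
  assumes "i < length cs" "x \<in> reps cs v" "0 < x ! i"
  shows "x[i := x ! i - 1] \<in> reps cs (v - cs ! i)"
proof -
  have "cs ! i * x ! i = cs ! i * (x ! i - 1) + cs ! i"
    using assms(3) by (cases "x ! i") auto
  then show ?thesis using reps_update[OF assms(1,2), of "x ! i - 1"] by simp
qed

lemma sum_list_add_coin: "i < length x \<Longrightarrow> sum_list (x[i := Suc (x ! i)]) = Suc (sum_list x)"
  by (simp add: sum_list_update elem_le_sum_list Suc_diff_le)

lemma reps_snoc: "x \<in> reps cs v \<Longrightarrow> x @ [t] \<in> reps (cs @ [c]) (v + c * t)"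
  by (simp add: reps_def nth_append)

lemma reps_snocE:
  assumes "x \<in> reps (cs @ [c]) v"
  obtains y t u where "x = y @ [t]" "y \<in> reps cs u" "v = u + c * t"
proof -
  have "length x = Suc (length cs)" using assms by (simp add: reps_def)
  then obtain y t where "x = y @ [t]" "length y = length cs"
    by (cases x rule: rev_cases) auto
  moreover from this have "y \<in> reps cs (\<Sum>i<length cs. cs ! i * y ! i)"
    by (simp add: reps_def)
  moreover from calculation assms have "v = (\<Sum>i<length cs. cs ! i * y ! i) + c * t"
    by (simp add: reps_def nth_append)
  ultimately show ?thesis using that by blast
qed

lemma reps_zero: "replicate (length cs) 0 \<in> reps cs 0"
  by (simp add: reps_def)

lemma reps_sum_list_zero: "x \<in> reps cs v \<Longrightarrow> sum_list x = 0 \<Longrightarrow> v = 0"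
  by (auto simp: reps_def)

lemma opt_attained:
  "x \<in> reps cs v \<Longrightarrow> \<exists>y\<in>reps cs v. sum_list y = opt cs v"
  unfolding opt_def by (rule LeastI_ex) blast

lemma grd_zero: "grd cs 0 = 0"
proof -
  have "grd_desc ds 0 = 0" for ds by (induction ds) auto
  then show ?thesis by (simp add: grd_def)
qed

lemma grd_snoc: "grd (cs @ [c]) v = v div c + grd cs (v mod c)"
  by (simp add: grd_def)

lemma grd_snoc_less: "v < c \<Longrightarrow> grd (cs @ [c]) v = grd cs v"
  by (simp add: grd_snoc)

lemma grd_snoc_sub: "0 < c \<Longrightarrow> c \<le> v \<Longrightarrow> grd (cs @ [c]) v = Suc (grd (cs @ [c]) (v - c))"
  by (simp add: grd_snoc le_div_geq le_mod_geq)

lemma grd_snoc_mult: "0 < c \<Longrightarrow> grd (cs @ [c]) (c * k) = k"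
  by (simp add: grd_snoc grd_zero)

lemma is_system_butlast: "is_system (cs @ [c]) \<Longrightarrow> cs \<noteq> [] \<Longrightarrow> is_system cs"
  by (simp add: is_system_def sorted_wrt_append)

lemma is_system_pos: "is_system cs \<Longrightarrow> c \<in> set cs \<Longrightarrow> 0 < c"
  by (cases cs) (auto simp: is_system_def)

lemma greedy_rep: "is_system cs \<Longrightarrow> \<exists>x\<in>reps cs v. sum_list x = grd cs v"
proof (induction cs arbitrary: v rule: rev_induct)
  case Nil
  then show ?case by (simp add: is_system_def)
next
  case (snoc c cs)
  show ?case
  proof (cases "cs = []")
    case True
    with snoc.prems have "c = 1" by (simp add: is_system_def)
    with True have "[v] \<in> reps (cs @ [c]) v" "sum_list [v] = grd (cs @ [c]) v"
      by (simp_all add: reps_def grd_def)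
    then show ?thesis by blast
  next
    case False
    with snoc obtain y where "y \<in> reps cs (v mod c)" "sum_list y = grd cs (v mod c)"
      using is_system_butlast by blast
    then have "y @ [v div c] \<in> reps (cs @ [c]) v" "sum_list (y @ [v div c]) = grd (cs @ [c]) v"
      using reps_snoc[of y cs "v mod c" "v div c" c] by (simp_all add: grd_snoc)
    then show ?thesis by blast
  qed
qed

lemma opt_add_coin_le_grd:
  assumes "is_system cs" "i < length cs"
  shows "opt cs (v + cs ! i) \<le> Suc (grd cs v)"
proof -
  obtain x where "x \<in> reps cs v" "sum_list x = grd cs v"
    using greedy_rep[OF assms(1)] by blast
  moreover from this have "length x = length cs" by (simp add: reps_def)
  ultimately show ?thesis
    using opt_le[OF reps_add_coin[OF assms(2)], of x v] assms(2) by (simp add: sum_list_add_coin)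
qed

lemma counterexample_snoc:
  assumes "is_system cs" "counterexample cs w" "w < c"
  shows "counterexample (cs @ [c]) w"
proof -
  obtain x where "x \<in> reps cs w" "sum_list x = opt cs w"
    using greedy_rep[OF assms(1)] opt_attained by blast
  then have "opt (cs @ [c]) w \<le> opt cs w"
    using opt_le[OF reps_snoc[of x cs w 0 c]] by simp
  with assms(2,3) show ?thesis by (simp add: counterexample_def grd_snoc_less)
qed

lemma canonical_grd_sum_two_coins:
  assumes "canonical cs" "p \<in> set cs" "q \<in> set cs"
  shows "grd cs (p + q) \<le> 2"
proof -
  obtain i j where ij: "i < length cs" "j < length cs" "p = cs ! i" "q = cs ! j"
    using assms(2,3) by (metis in_set_conv_nth)
  define x where "x = (replicate (length cs) (0::nat))[i := 1]"
  have x: "x \<in> reps cs p" "sum_list x = 1" "length x = length cs"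
    using reps_add_coin[OF ij(1) reps_zero] ij by (simp_all add: x_def sum_list_update)
  have "opt cs (p + q) \<le> sum_list (x[j := Suc (x ! j)])"
    using opt_le[OF reps_add_coin[OF ij(2) x(1)]] ij(4) by simp
  also have "\<dots> = 2"
    using sum_list_add_coin[of j x] x ij(2) by simp
  finally have "opt cs (p + q) \<le> 2" .
  moreover have "grd cs (p + q) \<le> opt cs (p + q) \<or> p + q = 0"
    using assms(1) unfolding canonical_def counterexample_def by (meson gr0I not_le)
  ultimately show ?thesis by (auto simp: grd_zero)
qed

definition min_counterexample :: "nat list \<Rightarrow> nat \<Rightarrow> bool" where
  "min_counterexample cs w \<longleftrightarrow> counterexample cs w \<and> (\<forall>v<w. \<not> counterexample cs v)"

lemma min_counterexample_exists:
  assumes "\<not> canonical cs"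
  obtains w where "min_counterexample cs w"
  using assms exists_least_iff[of "counterexample cs"]
  unfolding canonical_def min_counterexample_def by blast

text \<open>Kozen--Zaks: if the optimal representation of \<open>w\<close> uses a coin \<open>q\<close> with
  \<open>d + q \<le> w\<close>, then \<open>w - q\<close> is greedy-optimal, and adding \<open>q\<close> to the greedy
  representation of \<open>w - q - d\<close> shows that \<open>w - d\<close> is a smaller counterexample.\<close>

lemma min_counterexample_coin_bound:
  assumes sys: "is_system (cs @ [d])" and w: "min_counterexample (cs @ [d]) w"
    and x: "x \<in> reps (cs @ [d]) w" "sum_list x = opt (cs @ [d]) w"
    and i: "i < length (cs @ [d])" "0 < x ! i"
  shows "w < d + (cs @ [d]) ! i"
proof (rule ccontr)
  let ?C = "cs @ [d]" and ?q = "(cs @ [d]) ! i"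
  assume "\<not> w < d + ?q"
  moreover have "0 < d" "0 < ?q" using is_system_pos[OF sys] nth_mem[OF i(1)] by auto
  ultimately have le: "d \<le> w - ?q" "w - ?q < w" "w - d < w" "0 < w - d" by auto
  have "opt ?C (w - ?q) \<le> sum_list (x[i := x ! i - 1])"
    by (rule opt_le[OF reps_remove_coin[OF i(1) x(1) i(2)]])
  also have "Suc \<dots> = opt ?C w"
    using sum_list_add_coin[of i "x[i := x ! i - 1]"] x i by (simp add: reps_def)
  finally have rem: "opt ?C (w - ?q) < opt ?C w" by simp
  have "\<not> counterexample ?C (w - ?q)"
    using w le unfolding min_counterexample_def by auto
  then have "grd ?C (w - ?q) \<le> opt ?C (w - ?q)"
    using le unfolding counterexample_def by auto
  moreover have "grd ?C (w - ?q) = Suc (grd ?C (w - ?q - d))"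
    using le \<open>0 < d\<close> by (simp add: grd_snoc_sub)
  moreover have "opt ?C (w - d) \<le> Suc (grd ?C (w - ?q - d))"
    using opt_add_coin_le_grd[OF sys i(1), of "w - ?q - d"] le by (simp add: algebra_simps)
  moreover have "opt ?C w < grd ?C w" "grd ?C w = Suc (grd ?C (w - d))"
    using w le \<open>0 < d\<close> by (auto simp: min_counterexample_def counterexample_def grd_snoc_sub)
  ultimately have "counterexample ?C (w - d)"
    using rem le unfolding counterexample_def by linarith
  with w le show False unfolding min_counterexample_def by blast
qed

lemma is_system_nth_le_last:
  assumes "is_system cs" "i < length cs"
  shows "cs ! i \<le> last cs"
proof -
  have "last cs = cs ! (length cs - 1)" using assms(2) last_conv_nth[of cs] by fastforce
  moreover have "i < length cs - 1 \<Longrightarrow> cs ! i < cs ! (length cs - 1)"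
    using assms by (simp add: is_system_def sorted_wrt_nth_less)
  moreover have "\<not> i < length cs - 1 \<Longrightarrow> i = length cs - 1" using assms(2) by linarith
  ultimately show ?thesis by (cases "i < length cs - 1") auto
qed

lemma min_counterexample_less:
  assumes sys: "is_system (cs @ [d])" and "cs \<noteq> []" and w: "min_counterexample (cs @ [d]) w"
  shows "w < d + last cs"
proof -
  obtain x where x: "x \<in> reps (cs @ [d]) w" "sum_list x = opt (cs @ [d]) w"
    using greedy_rep[OF sys] opt_attained by blast
  then obtain y t u where y: "x = y @ [t]" "y \<in> reps cs u" "w = u + d * t"
    by (elim reps_snocE)
  have "\<exists>i<length y. 0 < y ! i"
  proof (rule ccontr)
    assume "\<not> ?thesis"
    then have "sum_list y = 0" by (auto simp: in_set_conv_nth)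
    then have "u = 0" using y(2) reps_sum_list_zero by blast
    with x y \<open>sum_list y = 0\<close> have "w = d * t" "opt (cs @ [d]) w = t" by auto
    moreover have "0 < d" using is_system_pos[OF sys] by simp
    ultimately show False
      using w by (simp add: min_counterexample_def counterexample_def grd_snoc_mult)
  qed
  then obtain i where i: "i < length cs" "0 < x ! i"
    using y by (auto simp: reps_def nth_append)
  then have "w < d + cs ! i"
    using min_counterexample_coin_bound[OF sys w x, of i] by (simp add: nth_append)
  also have "cs ! i \<le> last cs"
    using is_system_nth_le_last[OF is_system_butlast[OF sys \<open>cs \<noteq> []\<close>] i(1)] .
  finally show ?thesis by simp
qed

lemma two_coin_equation:
  fixes a c x y :: nat
  assumes "1 < a" "a < c" "c * x + (c + a - 1) * y = 2 * c + a - 2"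
  shows "x = 2 \<and> y = 0 \<and> a = 2"
proof -
  have "y = 0"
  proof (rule ccontr)
    assume "y \<noteq> 0"
    then consider "y = 1" | "2 \<le> y" by linarith
    then show False
    proof cases
      case 1
      then have "c * x = c - 1" using assms by simp
      then show False using assms by (cases x) auto
    next
      case 2
      then have "(c + a - 1) * 2 \<le> (c + a - 1) * y" by (rule mult_le_mono2)
      then show False using assms by linarith
    qed
  qed
  with assms have cx: "c * x = 2 * c + a - 2" by simp
  consider "x \<le> 1" | "x = 2" | "3 \<le> x" by linarith
  then show ?thesis
  proof cases
    case 1
    then have "c * x \<le> c * 1" by (rule mult_le_mono2)
    then show ?thesis using cx assms by linarith
  next
    case 2
    then have "c * 2 = 2 * c + a - 2" using cx by simp
    then show ?thesis using 2 \<open>y = 0\<close> assms(1) by linarith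
  next
    case 3
    then have "c * 3 \<le> c * x" by (rule mult_le_mono2)
    then show ?thesis using cx assms by linarith
  qed
qed

locale noncanonical_prefix =
  fixes a b c d w :: nat
  assumes system: "is_system [1, a, b, c, d, 2 * d - a]"
    and canonical: "canonical [1, a, b, c, d, 2 * d - a]"
    and min_cex: "min_counterexample [1, a, b, c, d] w"
begin

lemma coins_less: "1 < a" "a < b" "b < c" "c < d" "d < 2 * d - a"
  using system by (auto simp: is_system_def)

lemma prefix_system: "is_system [1, a, b, c, d]"
  using is_system_butlast[of "[1, a, b, c, d]"] system by simp

lemma w_ge: "2 * d - a \<le> w"
proof (rule ccontr)
  assume "\<not> 2 * d - a \<le> w"
  then have "counterexample [1, a, b, c, d, 2 * d - a] w"
    using counterexample_snoc[OF prefix_system, of w] min_cex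
    by (simp add: min_counterexample_def)
  with canonical show False by (simp add: canonical_def)
qed

lemma w_less: "w < d + c"
  using min_counterexample_less[of "[1, a, b, c]" d w] prefix_system min_cex by simp

lemma d_eq: "d = c + a - 1"
proof -
  have "d < c + a" using w_ge w_less coins_less by linarith
  then have "(c + d) div (2 * d - a) = 1" "(c + d) mod (2 * d - a) = c + a - d"
    using coins_less by (auto intro: div_nat_eqI simp: mod_if)
  moreover have "c + a - d < a" using coins_less by linarith
  ultimately have "grd [1, a, b, c, d, 2 * d - a] (c + d) = 1 + (c + a - d)"
    using coins_less by (simp add: grd_def)
  moreover have "grd [1, a, b, c, d, 2 * d - a] (c + d) \<le> 2"
    using canonical_grd_sum_two_coins[OF canonical] by simp
  ultimately show ?thesis using \<open>d < c + a\<close> by linarith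
qed

lemma w_eq: "w = 2 * c + a - 2"
  using w_ge w_less d_eq coins_less by linarith

lemma optimal_rep_uses_c_d:
  assumes "x \<in> reps [1, a, b, c, d] w" "sum_list x = opt [1, a, b, c, d] w"
  shows "\<exists>y z. x = [0, 0, 0, y, z] \<and> c * y + d * z = w"
proof -
  have "length x = 5" using assms(1) by (simp add: reps_def)
  then obtain x0 x1 x2 y z where x: "x = [x0, x1, x2, y, z]"
    by (auto simp: numeral_eq_Suc length_Suc_conv)
  have unused_coin: "x ! i = 0" if "i < 3" for i
  proof (rule ccontr)
    assume "x ! i \<noteq> 0"
    then have "w < d + [1, a, b, c, d] ! i"
      using min_counterexample_coin_bound[of "[1, a, b, c]" d w x i] prefix_system min_cex assms that
      by simp
    moreover have "[1, a, b, c, d] ! i \<le> b"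
      using that coins_less by (auto simp: less_Suc_eq numeral_eq_Suc)
    ultimately show False using w_eq d_eq coins_less by linarith
  qed
  have "x0 = 0" "x1 = 0" "x2 = 0"
    using unused_coin[of 0] unused_coin[of 1] unused_coin[of 2] x by simp_all
  moreover have "x0 + a * x1 + b * x2 + c * y + d * z = w"
    using assms(1) x by (simp add: reps_def numeral_eq_Suc lessThan_Suc algebra_simps)
  ultimately show ?thesis using x by auto
qed

lemma
  shows a_eq: "a = 2" and opt_w: "opt [1, a, b, c, d] w = 2"
proof -
  obtain x where "x \<in> reps [1, a, b, c, d] w" "sum_list x = opt [1, a, b, c, d] w"
    using greedy_rep[OF prefix_system] opt_attained by blast
  moreover obtain y z where "x = [0, 0, 0, y, z]" "c * y + d * z = w"
    using optimal_rep_uses_c_d[OF calculation] by blast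
  moreover from this have "y = 2 \<and> z = 0 \<and> a = 2"
    using two_coin_equation[of a c y z] coins_less d_eq w_eq by simp
  ultimately show "a = 2" "opt [1, a, b, c, d] w = 2" by auto
qed

lemma gap_b_c: "b + 1 < c"
proof (rule ccontr)
  assume "\<not> b + 1 < c"
  then have b: "b = c - 1" using coins_less by linarith
  have "(2 * c) div (c + 1) = 1" "(2 * c) mod (c + 1) = c - 1"
    using coins_less by (auto intro: div_nat_eqI simp: mod_if)
  then have "grd [1, a, b, c, d] w = 2"
    using b coins_less d_eq w_eq a_eq by (simp add: grd_def)
  with opt_w min_cex show False
    by (simp add: min_counterexample_def counterexample_def)
qed

lemma b_eq: "b = 3"
proof -
  have "(b + c) div (c + 1) = 1" "(b + c) mod (c + 1) = b - 1"
    using coins_less by (auto intro: div_nat_eqI simp: mod_if)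
  then have "grd [1, a, b, c, d, 2 * d - a] (b + c) = 1 + ((b - 1) div 2 + (b - 1) mod 2)"
    using coins_less d_eq a_eq by (simp add: grd_def)
  moreover have "grd [1, a, b, c, d, 2 * d - a] (b + c) \<le> 2"
    using canonical_grd_sum_two_coins[OF canonical] by simp
  moreover have "b - 1 = 2 * ((b - 1) div 2) + (b - 1) mod 2" by simp
  ultimately show ?thesis using coins_less a_eq by linarith
qed

end

theorem lemma7:
  fixes c2 c3 c4 c5 :: nat
  assumes "is_system [1, c2, c3, c4, c5, 2 * c5 - c2]"
    and "canonical [1, c2, c3, c4, c5, 2 * c5 - c2]"
    and "\<not> canonical [1, c2, c3, c4, c5]"
  shows "[1, c2, c3, c4, c5, 2 * c5 - c2] = [1, 2, 3, c4, c4 + 1, 2 * c4] \<and> c4 > 4"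
proof -
  obtain w where "min_counterexample [1, c2, c3, c4, c5] w"
    using min_counterexample_exists[OF assms(3)] .
  with assms(1,2) interpret noncanonical_prefix c2 c3 c4 c5 w
    by unfold_locales
  show ?thesis using a_eq b_eq d_eq gap_b_c by simp
qed

end
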